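(* Let $\Omega\subset\mathbb{R}^d$ ($d=2,3$) be a bounded domain, let $\eta>0$, $\tau_s>0$, $\gamma>0$. For a matrix $\mathbf{A}\in\mathbb{R}^{d\times d}$ set $|\mathbf{A}|_\gamma:=\max\{\tau_s,\gamma|\mathbf{A}|\}$ (with $|\cdot|$ the Frobenius norm), and define $\mu(t):=2\eta+\tau_s\gamma\frac{1}{t}$ for $t>0$. Then there exist constants $C_1,C_2>0$ such that for all $d\times d$ tensor fields $\boldsymbol{\theta},\boldsymbol{\vartheta}\in \mathbb{L}^p(\Omega)$, $$|\mu(|\boldsymbol{\theta}|_{\gamma})\boldsymbol{\theta}-\mu(|\boldsymbol{\vartheta}|_{\gamma})\boldsymbol{\vartheta}| \leq C_1|\boldsymbol{\theta}-\boldsymbol{\vartheta}|$$ and $$C_2|\boldsymbol{\theta}-\boldsymbol{\vartheta}|^2 \leq (\mu(|\boldsymbol{\theta}|_{\gamma})\boldsymbol{\theta}-\mu(|\boldsymbol{\vartheta}|_{\gamma})\boldsymbol{\vartheta}):(\boldsymbol{\theta}-\boldsymbol{\vartheta})$$ almost everywhere in $\Omega$.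
   Context: $\mathbb{L}^p(\Omega)$ denotes the space of $d\times d$ tensor fields on $\Omega$ with components in $L^p(\Omega)$; $\mathbf{A}:\mathbf{B}=\sum_{i,j}A_{ij}B_{ij}$ is the Frobenius inner product. $\eta$ is the viscosity, $\tau_s$ the yield stress and $\gamma$ a regularization parameter; the constants $C_1,C_2$ may depend on $\eta,\tau_s,\gamma$ but not on $\boldsymbol{\theta},\boldsymbol{\vartheta}$ or $x$. *)

theory Defs
  imports "HOL-Analysis.Analysis"
begin

text \<open>Tensors are elements of real^'d^'d; norm is the Frobenius norm and inner
  (the bullet operator) is the Frobenius inner product.\<close>

definition gnorm :: "real \<Rightarrow> real \<Rightarrow> real^'d^'d \<Rightarrow> real" where
  "gnorm tau_s gam A = max tau_s (gam * norm A)"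

definition mu :: "real \<Rightarrow> real \<Rightarrow> real \<Rightarrow> real \<Rightarrow> real" where
  "mu eta tau_s gam t = 2 * eta + tau_s * gam * (1 / t)"

definition in_Lp :: "real \<Rightarrow> (real^'d) set \<Rightarrow> (real^'d \<Rightarrow> real^'d^'d) \<Rightarrow> bool" where
  "in_Lp p \<Omega> f \<longleftrightarrow> f \<in> borel_measurable (lebesgue_on \<Omega>)
      \<and> integrable (lebesgue_on \<Omega>) (\<lambda>x. norm (f x) powr p)"

end

theory Submission
  imports Defs
begin

text \<open>The map \<open>A \<mapsto> \<mu>(|A|\<^sub>\<gamma>) A\<close> equals \<open>2\<eta> A + \<gamma> P A\<close>, where \<open>P\<close> is the metric projection onto
  the closed ball of radius \<open>\<tau>\<^sub>s / \<gamma>\<close>. Projections onto closed convex sets are nonexpansive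
  and monotone, so the map is Lipschitz with constant \<open>2\<eta> + \<gamma>\<close> and strongly monotone
  with constant \<open>2\<eta>\<close>, pointwise for every pair of tensors.\<close>

lemma closest_point_monotone:
  assumes "convex S" "closed S" "S \<noteq> {}"
  shows "0 \<le> (closest_point S x - closest_point S y) \<bullet> (x - y)"
proof -
  have "(x - closest_point S x) \<bullet> (closest_point S y - closest_point S x) \<le> 0"
    and "(y - closest_point S y) \<bullet> (closest_point S x - closest_point S y) \<le> 0"
    by (simp_all add: assms closest_point_dot closest_point_in_set)
  moreover have "0 \<le> (closest_point S x - closest_point S y) \<bullet> (closest_point S x - closest_point S y)"
    by simp
  ultimately show ?thesis
    by (simp add: inner_diff inner_commute)
qed

lemma closest_point_cball_0:
  fixes x :: "'a::{real_inner,heine_borel}"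
  assumes "r > 0"
  shows "closest_point (cball 0 r) x = (r / max r (norm x)) *\<^sub>R x"
proof (cases "norm x \<le> r")
  case True
  then show ?thesis
    using assms by (simp add: closest_point_self)
next
  case False
  let ?p = "(r / norm x) *\<^sub>R x"
  have x_pos: "norm x > 0" and ratio: "r / norm x \<le> 1"
    using False assms by (auto simp: divide_le_eq_1)
  have norm_p: "norm ?p = r"
    using x_pos assms by simp
  have dist_p: "dist x ?p = norm x - r"
  proof -
    have "dist x ?p = norm ((1 - r / norm x) *\<^sub>R x)"
      by (simp add: dist_norm algebra_simps)
    also have "\<dots> = (1 - r / norm x) * norm x"
      using ratio by simp
    finally show ?thesis
      using x_pos by (simp add: field_simps)
  qed
  have "?p = closest_point (cball 0 r) x"
  proof (rule closest_point_unique)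
    show "\<forall>z\<in>cball 0 r. dist x ?p \<le> dist x z"
    proof
      fix z :: 'a
      assume "z \<in> cball 0 r"
      then have "norm x - r \<le> norm x - norm z"
        by simp
      also have "\<dots> \<le> dist x z"
        using norm_triangle_ineq2[of x z] by (simp add: dist_norm)
      finally show "dist x ?p \<le> dist x z"
        using dist_p by simp
    qed
  qed (use norm_p in auto)
  then show ?thesis
    using False by simp
qed

lemma mu_gnorm_scaleR_eq:
  assumes "tau_s > 0" "gam > 0"
  shows "mu eta tau_s gam (gnorm tau_s gam A) *\<^sub>R A
    = (2 * eta) *\<^sub>R A + gam *\<^sub>R closest_point (cball 0 (tau_s / gam)) A"
proof -
  have "gam * max (tau_s / gam) (norm A) = max tau_s (gam * norm A)"
    using assms by (simp add: max_mult_distrib_left)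
  then have "gam * ((tau_s / gam) / max (tau_s / gam) (norm A))
      = tau_s * gam * (1 / max tau_s (gam * norm A))"
    using assms by (simp add: field_simps)
  then show ?thesis
    using assms unfolding mu_def gnorm_def
    by (simp add: closest_point_cball_0 scaleR_add_left)
qed

lemma closest_point_combination_lipschitz:
  assumes "convex S" "closed S" "S \<noteq> {}" "c \<ge> 0" "d \<ge> 0"
  shows "norm ((c *\<^sub>R x + d *\<^sub>R closest_point S x) - (c *\<^sub>R y + d *\<^sub>R closest_point S y))
    \<le> (c + d) * norm (x - y)"
proof -
  have "norm ((c *\<^sub>R x + d *\<^sub>R closest_point S x) - (c *\<^sub>R y + d *\<^sub>R closest_point S y))
      = norm (c *\<^sub>R (x - y) + d *\<^sub>R (closest_point S x - closest_point S y))"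
    by (simp add: algebra_simps)
  also have "\<dots> \<le> c * norm (x - y) + d * norm (closest_point S x - closest_point S y)"
    using assms norm_triangle_ineq by (metis abs_of_nonneg norm_scaleR)
  also have "\<dots> \<le> c * norm (x - y) + d * norm (x - y)"
    using closest_point_lipschitz[OF assms(1-3), of x y] assms(5)
    by (simp add: dist_norm mult_left_mono)
  finally show ?thesis
    by (simp add: distrib_right)
qed

lemma closest_point_combination_strongly_monotone:
  assumes "convex S" "closed S" "S \<noteq> {}" "d \<ge> 0"
  shows "c * (norm (x - y))\<^sup>2
    \<le> ((c *\<^sub>R x + d *\<^sub>R closest_point S x) - (c *\<^sub>R y + d *\<^sub>R closest_point S y)) \<bullet> (x - y)"
proof -
  have "((c *\<^sub>R x + d *\<^sub>R closest_point S x) - (c *\<^sub>R y + d *\<^sub>R closest_point S y)) \<bullet> (x - y)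
      = c * (norm (x - y))\<^sup>2 + d * ((closest_point S x - closest_point S y) \<bullet> (x - y))"
    by (simp add: power2_norm_eq_inner algebra_simps)
  then show ?thesis
    using closest_point_monotone[OF assms(1-3), of x y] assms(4) by simp
qed

theorem lemma2:
  fixes \<Omega> :: "(real^'d) set" and eta tau_s gam p :: real
  assumes "CARD('d) = 2 \<or> CARD('d) = 3"
    and "open \<Omega>" and "connected \<Omega>" and "bounded \<Omega>" and "\<Omega> \<noteq> {}"
    and "eta > 0" and "tau_s > 0" and "gam > 0" and "p \<ge> 1"
  shows "\<exists>C1 C2. C1 > 0 \<and> C2 > 0 \<and>
    (\<forall>\<theta> \<phi> :: real^'d \<Rightarrow> real^'d^'d. in_Lp p \<Omega> \<theta> \<and> in_Lp p \<Omega> \<phi> \<longrightarrow>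
      (AE x in lebesgue_on \<Omega>.
         norm (mu eta tau_s gam (gnorm tau_s gam (\<theta> x)) *\<^sub>R \<theta> x
               - mu eta tau_s gam (gnorm tau_s gam (\<phi> x)) *\<^sub>R \<phi> x)
           \<le> C1 * norm (\<theta> x - \<phi> x)
       \<and> C2 * (norm (\<theta> x - \<phi> x))^2
           \<le> (mu eta tau_s gam (gnorm tau_s gam (\<theta> x)) *\<^sub>R \<theta> x
               - mu eta tau_s gam (gnorm tau_s gam (\<phi> x)) *\<^sub>R \<phi> x) \<bullet> (\<theta> x - \<phi> x)))"
proof -
  let ?B = "cball (0 :: real^'d^'d) (tau_s / gam)"
  have "tau_s / gam > 0"
    using assms(7,8) by simp
  then have ball: "convex ?B" "closed ?B" "?B \<noteq> {}"
    by auto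
  have "norm (mu eta tau_s gam (gnorm tau_s gam A) *\<^sub>R A - mu eta tau_s gam (gnorm tau_s gam B) *\<^sub>R B)
        \<le> (2 * eta + gam) * norm (A - B)
      \<and> (2 * eta) * (norm (A - B))\<^sup>2
        \<le> (mu eta tau_s gam (gnorm tau_s gam A) *\<^sub>R A - mu eta tau_s gam (gnorm tau_s gam B) *\<^sub>R B)
            \<bullet> (A - B)" for A B :: "real^'d^'d"
    unfolding mu_gnorm_scaleR_eq[OF assms(7,8)]
    using closest_point_combination_lipschitz[OF ball] closest_point_combination_strongly_monotone[OF ball]
      assms(6,8) by simp
  then show ?thesis
    using assms(6,8) by (intro exI[of _ "2 * eta + gam"] exI[of _ "2 * eta"]) simp
qed

end
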